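(* Let $G=G_0*_HG_1$ be a nondegenerate free product with amalgamation, and let $K_0,K_1$ be as defined below. The following are equivalent: (i) $K_0=K_1=\{e\}$; (ii) for every finite $F\subseteq G\setminus\{e\}$ there exists $g\in G$ with $gFg^{-1}\cap H=\varnothing$; (iii) for every finite $F\subseteq H\setminus\{e\}$ there exists $g\in G$ with $gFg^{-1}\cap H=\varnothing$. Moreover, any one of these equivalent conditions implies that $G$ is a Powers group and has the free semigroup property.
   Context: The amalgam is nondegenerate if $([G_0:H]-1)([G_1:H]-1)\ge 2$. For $j=0,1$ and $k\ge1$ let $T_{j,k}=\{g_0g_1\cdots g_{k-1}: g_i\in G_{i+j \bmod 2}\setminus H\}$, and $T_{j,0}=H$. Let $C_{j,k}=\bigcap_{g\in T_{j,k}}gHg^{-1}$ and $K_j=\bigcap_{k\ge0}C_{j,k}$ for $j=0,1$. A group $G$ is a Powers group if for every finite $F\subseteq G\setminus\{e\}$ and every integer $k\ge1$ there exist a partition $G=D\sqcup E$ and elements $g_1,\dots,g_k\in G$ such that $fD\cap D=\varnothing$ for all $f\in F$ and $g_iE\cap g_jE=\varnothing$ for all distinct $i,j$. $G$ has the free semigroup property if for every finite $F\subseteq G$ there is $g\in G$ such that the subsemigroup generated by $gF$ is free on $gF$. *)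

theory Defs
  imports "HOL-Algebra.Algebra"
begin

definition word_prod :: "('a, 'b) monoid_scheme \<Rightarrow> 'a list \<Rightarrow> 'a" where
  "word_prod G xs = foldr (\<lambda>x y. x \<otimes>\<^bsub>G\<^esub> y) xs \<one>\<^bsub>G\<^esub>"

definition alt_word :: "'a set \<Rightarrow> 'a set \<Rightarrow> 'a set \<Rightarrow> nat \<Rightarrow> 'a list \<Rightarrow> bool" where
  "alt_word G0 G1 H j xs \<longleftrightarrow>
     (\<forall>i < length xs. xs ! i \<in> (if even (i + j) then G0 else G1) - H)"

text \<open>G is the (internal) free product of the subgroups G0 and G1 amalgamated over H:
  G is generated by G0 and G1, H is a common subgroup, and (normal form theorem)
  no nonempty alternating (reduced) word represents an element of H.\<close>
definition amalgam :: "('a, 'b) monoid_scheme \<Rightarrow> 'a set \<Rightarrow> 'a set \<Rightarrow> 'a set \<Rightarrow> bool" where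
  "amalgam G G0 G1 H \<longleftrightarrow>
     group G \<and> subgroup G0 G \<and> subgroup G1 G \<and> subgroup H G \<and> H \<subseteq> G0 \<and> H \<subseteq> G1 \<and>
     generate G (G0 \<union> G1) = carrier G \<and>
     (\<forall>j \<in> {0, 1}. \<forall>xs. xs \<noteq> [] \<and> alt_word G0 G1 H j xs \<longrightarrow> word_prod G xs \<notin> H)"

text \<open>Right cosets of H in the subgroup A (their number is the index [A:H]).\<close>
definition cosets_in :: "('a, 'b) monoid_scheme \<Rightarrow> 'a set \<Rightarrow> 'a set \<Rightarrow> 'a set set" where
  "cosets_in G A H = (\<Union>g\<in>A. {H #>\<^bsub>G\<^esub> g})"

text \<open>Nondegeneracy ([G0:H]-1)([G1:H]-1) >= 2, where indices may be infinite.\<close>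
definition nondegenerate :: "('a, 'b) monoid_scheme \<Rightarrow> 'a set \<Rightarrow> 'a set \<Rightarrow> 'a set \<Rightarrow> bool" where
  "nondegenerate G G0 G1 H \<longleftrightarrow>
     (let R0 = cosets_in G G0 H; R1 = cosets_in G G1 H in
       (infinite R0 \<or> card R0 \<ge> 2) \<and> (infinite R1 \<or> card R1 \<ge> 2) \<and>
       (infinite R0 \<or> infinite R1 \<or> (card R0 - 1) * (card R1 - 1) \<ge> 2))"

definition T_set :: "('a, 'b) monoid_scheme \<Rightarrow> 'a set \<Rightarrow> 'a set \<Rightarrow> 'a set \<Rightarrow> nat \<Rightarrow> nat \<Rightarrow> 'a set" where
  "T_set G G0 G1 H j k =
     (if k = 0 then H
      else {word_prod G xs | xs. length xs = k \<and> alt_word G0 G1 H j xs})"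

definition conj_set :: "('a, 'b) monoid_scheme \<Rightarrow> 'a \<Rightarrow> 'a set \<Rightarrow> 'a set" where
  "conj_set G g A = (\<lambda>a. g \<otimes>\<^bsub>G\<^esub> a \<otimes>\<^bsub>G\<^esub> inv\<^bsub>G\<^esub> g) ` A"

definition C_set :: "('a, 'b) monoid_scheme \<Rightarrow> 'a set \<Rightarrow> 'a set \<Rightarrow> 'a set \<Rightarrow> nat \<Rightarrow> nat \<Rightarrow> 'a set" where
  "C_set G G0 G1 H j k = (\<Inter>g \<in> T_set G G0 G1 H j k. conj_set G g H)"

definition K_set :: "('a, 'b) monoid_scheme \<Rightarrow> 'a set \<Rightarrow> 'a set \<Rightarrow> 'a set \<Rightarrow> nat \<Rightarrow> 'a set" where
  "K_set G G0 G1 H j = (\<Inter>k. C_set G G0 G1 H j k)"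

definition powers_group :: "('a, 'b) monoid_scheme \<Rightarrow> bool" where
  "powers_group G \<longleftrightarrow>
     (\<forall>F k. finite F \<and> F \<subseteq> carrier G - {\<one>\<^bsub>G\<^esub>} \<and> k \<ge> (1::nat) \<longrightarrow>
        (\<exists>D E g. D \<union> E = carrier G \<and> D \<inter> E = {} \<and>
           (\<forall>f\<in>F. (f <#\<^bsub>G\<^esub> D) \<inter> D = {}) \<and>
           (\<forall>i<k. g i \<in> carrier G) \<and>
           (\<forall>i<k. \<forall>i'<k. i \<noteq> i' \<longrightarrow> (g i <#\<^bsub>G\<^esub> E) \<inter> (g i' <#\<^bsub>G\<^esub> E) = {})))"

definition free_semigroup_on :: "('a, 'b) monoid_scheme \<Rightarrow> 'a set \<Rightarrow> bool" where
  "free_semigroup_on G S \<longleftrightarrow>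
     (\<forall>xs ys. xs \<noteq> [] \<and> ys \<noteq> [] \<and> set xs \<subseteq> S \<and> set ys \<subseteq> S \<and>
        word_prod G xs = word_prod G ys \<longrightarrow> xs = ys)"

definition free_semigroup_property :: "('a, 'b) monoid_scheme \<Rightarrow> bool" where
  "free_semigroup_property G \<longleftrightarrow>
     (\<forall>F. finite F \<and> F \<subseteq> carrier G \<longrightarrow>
        (\<exists>g\<in>carrier G. free_semigroup_on G (g <#\<^bsub>G\<^esub> F)))"

end

theory Submission
  imports Defs
begin

text \<open>
  Every element of \<open>G\<close> lies in \<open>H\<close> or is the product of a nonempty reduced word; let \<open>T\<^sub>j\<close>
  be the products of reduced words starting in \<open>G\<^sub>j\<close>. A reduced word of odd length starting
  (hence ending) in \<open>G\<^sub>j\<close> maps \<open>H \<union> T\<^sub>j\<^sub>+\<^sub>1\<close> into \<open>T\<^sub>j\<close>, which is disjoint from \<open>H \<union> T\<^sub>j\<^sub>+\<^sub>1\<close>;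
  every conclusion is an application of this ping-pong.

  If \<open>K\<^sub>0 = K\<^sub>1 = {e}\<close>, every nontrivial element of \<open>H\<close> is conjugated out of \<open>H\<close> by reduced
  words starting in either factor. A case analysis on normal forms, using that by
  nondegeneracy one factor has at least three cosets of \<open>H\<close>, then conjugates every
  \<open>x \<noteq> e\<close> to an odd reduced word by a reduced word continuing any given one; as continuing the
  conjugator keeps odd words odd, finitely many elements are handled at once. This gives (ii)
  and, with \<open>D = W(H \<union> T\<^sub>d)\<close>, \<open>E = W T\<^sub>d\<^sub>+\<^sub>1\<close> and the powers of an odd word, the Powers
  property; the same sets drive a ping-pong proof of the free semigroup property. Finally,
  (iii) forces \<open>K\<^sub>j = {e}\<close>: a nontrivial \<open>x \<in> K\<^sub>j\<close> lies in \<open>H\<close> together with its conjugate by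
  a letter \<open>a \<in> G\<^sub>j - H\<close>, and for any \<open>g\<close> one of \<open>g\<^sup>-\<^sup>1\<close> and \<open>a g\<^sup>-\<^sup>1\<close> lies in \<open>H \<union> T\<^sub>j\<close>.
\<close>

section \<open>Words, conjugation and cosets in groups\<close>

lemma (in monoid) word_prod_Nil [simp]: "word_prod G [] = \<one>"
  by (simp add: word_prod_def)

lemma (in monoid) word_prod_Cons [simp]: "word_prod G (x # xs) = x \<otimes> word_prod G xs"
  by (simp add: word_prod_def)

lemma (in monoid) word_prod_closed [simp]: "set xs \<subseteq> carrier G \<Longrightarrow> word_prod G xs \<in> carrier G"
  by (induction xs) auto

lemma (in monoid) word_prod_append:
  "set xs \<subseteq> carrier G \<Longrightarrow> set ys \<subseteq> carrier G \<Longrightarrow>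
    word_prod G (xs @ ys) = word_prod G xs \<otimes> word_prod G ys"
  by (induction xs) (auto simp: m_assoc)

lemma (in group) word_prod_rev_map_inv:
  "set xs \<subseteq> carrier G \<Longrightarrow> word_prod G (rev (map (m_inv G) xs)) = inv (word_prod G xs)"
proof (induction xs)
  case (Cons x xs)
  have "set (rev (map (m_inv G) xs)) \<subseteq> carrier G" using Cons.prems by auto
  then show ?case using Cons by (simp add: word_prod_append inv_mult_group)
qed simp

lemma (in monoid) word_prod_concat_replicate:
  "a \<in> carrier G \<Longrightarrow> b \<in> carrier G \<Longrightarrow>
    word_prod G (concat (replicate n [a, b])) = (a \<otimes> b) [^] n"
proof (induction n)
  case (Suc n)
  have "(a \<otimes> b) [^] n \<otimes> (a \<otimes> b) = (a \<otimes> b) \<otimes> (a \<otimes> b) [^] n"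
    using nat_pow_comm[of "a \<otimes> b" n 1] Suc.prems by simp
  with Suc show ?case by (simp add: m_assoc)
qed simp

lemma (in monoid) nat_pow_mult_rotate:
  "x \<in> carrier G \<Longrightarrow> y \<in> carrier G \<Longrightarrow> (x \<otimes> y) [^] (n::nat) \<otimes> (x \<otimes> y) = x \<otimes> ((y \<otimes> x) [^] n \<otimes> y)"
proof (induction n)
  case (Suc n)
  then show ?case by (simp add: m_assoc)
qed simp

lemma (in group) infinite_carrier_if_pow_ne_one:
  assumes "x \<in> carrier G" and "\<And>n::nat. n \<ge> 1 \<Longrightarrow> x [^] n \<noteq> \<one>"
  shows "infinite (carrier G)"
proof
  assume "finite (carrier G)"
  then have "ord x \<ge> 1" using ord_ge_1 assms(1) by blast
  then show False using assms(2)[of "ord x"] pow_ord_eq_1[OF assms(1)] by simp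
qed

lemma l_coset_mono: "M \<subseteq> N \<Longrightarrow> a <#\<^bsub>G\<^esub> M \<subseteq> a <#\<^bsub>G\<^esub> N"
  unfolding l_coset_def by blast

text \<open>
  Conjugation is taken as the right action \<open>x \<mapsto> v\<^sup>-\<^sup>1 x v\<close>, so that conjugating by a word
  conjugates by its letters in turn; \<open>conj_set\<close> uses the opposite convention
  (see \<open>conj_set_inv_eq\<close>).
\<close>

definition conjugate :: "('a, 'b) monoid_scheme \<Rightarrow> 'a \<Rightarrow> 'a \<Rightarrow> 'a" where
  "conjugate G v x = inv\<^bsub>G\<^esub> v \<otimes>\<^bsub>G\<^esub> x \<otimes>\<^bsub>G\<^esub> v"

context group
begin

lemma m_inv_cancel_left [simp]: "x \<in> carrier G \<Longrightarrow> y \<in> carrier G \<Longrightarrow> x \<otimes> (inv x \<otimes> y) = y"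
  by (simp add: m_assoc[symmetric])

lemma inv_m_cancel_left [simp]: "x \<in> carrier G \<Longrightarrow> y \<in> carrier G \<Longrightarrow> inv x \<otimes> (x \<otimes> y) = y"
  by (simp add: m_assoc[symmetric])

lemma conjugate_closed [simp]:
  "v \<in> carrier G \<Longrightarrow> x \<in> carrier G \<Longrightarrow> conjugate G v x \<in> carrier G"
  by (simp add: conjugate_def)

lemma conjugate_one [simp]: "v \<in> carrier G \<Longrightarrow> conjugate G v \<one> = \<one>"
  by (simp add: conjugate_def)

lemma conjugate_self [simp]: "v \<in> carrier G \<Longrightarrow> conjugate G v v = v"
  by (simp add: conjugate_def)

lemma conjugate_by_one [simp]: "x \<in> carrier G \<Longrightarrow> conjugate G \<one> x = x"
  by (simp add: conjugate_def)

lemma conjugate_mult: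
  "v \<in> carrier G \<Longrightarrow> w \<in> carrier G \<Longrightarrow> x \<in> carrier G \<Longrightarrow>
    conjugate G (v \<otimes> w) x = conjugate G w (conjugate G v x)"
  by (simp add: conjugate_def inv_mult_group m_assoc)

lemma conjugate_inv:
  "v \<in> carrier G \<Longrightarrow> x \<in> carrier G \<Longrightarrow> conjugate G v (inv x) = inv (conjugate G v x)"
  by (simp add: conjugate_def inv_mult_group m_assoc)

lemma subgroup_conjugate_closed:
  "subgroup A G \<Longrightarrow> v \<in> A \<Longrightarrow> x \<in> A \<Longrightarrow> conjugate G v x \<in> A"
  unfolding conjugate_def by (simp add: subgroup.m_closed subgroup.m_inv_closed)

lemma mult_eq_mult_conjugate:
  "v \<in> carrier G \<Longrightarrow> x \<in> carrier G \<Longrightarrow> x \<otimes> v = v \<otimes> conjugate G v x"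
  by (simp add: conjugate_def m_assoc)

lemma conjugate_eq_one_iff:
  assumes "v \<in> carrier G" "x \<in> carrier G"
  shows "conjugate G v x = \<one> \<longleftrightarrow> x = \<one>"
proof
  assume "conjugate G v x = \<one>"
  then have "x \<otimes> v = v" using mult_eq_mult_conjugate[OF assms] assms by simp
  then show "x = \<one>" using assms by simp
qed (use assms in simp)

lemma mem_conj_set_iff:
  "t \<in> carrier G \<Longrightarrow> y \<in> carrier G \<Longrightarrow> A \<subseteq> carrier G \<Longrightarrow>
    y \<in> conj_set G t A \<longleftrightarrow> conjugate G t y \<in> A"
  unfolding conj_set_def conjugate_def
  by (force simp: m_assoc inv_solve_left inv_solve_right)

lemma conj_set_inv_eq: "W \<in> carrier G \<Longrightarrow> conj_set G (inv W) F = conjugate G W ` F"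
  by (simp add: conj_set_def conjugate_def)

lemma mem_l_coset_iff:
  "a \<in> carrier G \<Longrightarrow> M \<subseteq> carrier G \<Longrightarrow> x \<in> a <# M \<longleftrightarrow> x \<in> carrier G \<and> inv a \<otimes> x \<in> M"
  unfolding l_coset_def by (force simp: m_assoc[symmetric])

lemma l_coset_disjoint_iff:
  assumes "x \<in> carrier G" "y \<in> carrier G" "A \<subseteq> carrier G" "B \<subseteq> carrier G"
  shows "(x <# A) \<inter> (y <# B) = {} \<longleftrightarrow> ((inv y \<otimes> x) <# A) \<inter> B = {}"
proof
  assume disj: "(x <# A) \<inter> (y <# B) = {}"
  show "((inv y \<otimes> x) <# A) \<inter> B = {}"
  proof (rule equals0I)
    fix z assume "z \<in> ((inv y \<otimes> x) <# A) \<inter> B"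
    then obtain a where "a \<in> A" "z = inv y \<otimes> x \<otimes> a" "z \<in> B"
      unfolding l_coset_def by auto
    moreover have "y \<otimes> z = x \<otimes> a"
      using \<open>a \<in> A\<close> \<open>z = inv y \<otimes> x \<otimes> a\<close> assms by (auto simp: m_assoc subset_iff)
    ultimately have "y \<otimes> z \<in> (x <# A) \<inter> (y <# B)"
      using \<open>a \<in> A\<close> unfolding l_coset_def by blast
    with disj show False by blast
  qed
next
  assume disj: "((inv y \<otimes> x) <# A) \<inter> B = {}"
  show "(x <# A) \<inter> (y <# B) = {}"
  proof (rule equals0I)
    fix z assume "z \<in> (x <# A) \<inter> (y <# B)"
    then obtain a b where "a \<in> A" "b \<in> B" "x \<otimes> a = y \<otimes> b"
      unfolding l_coset_def by auto
    then have "b \<in> ((inv y \<otimes> x) <# A) \<inter> B"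
      using assms unfolding l_coset_def by (force simp: m_assoc subset_iff)
    with disj show False by blast
  qed
qed

lemma l_coset_conj_disjoint_iff:
  assumes "W \<in> carrier G" "x \<in> carrier G" "y \<in> carrier G" "A \<subseteq> carrier G"
  shows "((W \<otimes> x \<otimes> inv W) <# (W <# A)) \<inter> ((W \<otimes> y \<otimes> inv W) <# (W <# A)) = {} \<longleftrightarrow>
    ((inv y \<otimes> x) <# A) \<inter> A = {}"
proof -
  have "(W \<otimes> z \<otimes> inv W) <# (W <# A) = (W \<otimes> z) <# A" if "z \<in> carrier G" for z
    using that assms by (simp add: lcos_m_assoc m_assoc)
  then show ?thesis
    using assms by (simp add: l_coset_disjoint_iff inv_mult_group m_assoc)
qed

lemma finite_quotients: "finite F \<Longrightarrow> finite {inv f' \<otimes> f | f f'. f \<in> F \<and> f' \<in> F \<and> f \<noteq> f'}"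
proof -
  assume "finite F"
  moreover have "{inv f' \<otimes> f | f f'. f \<in> F \<and> f' \<in> F \<and> f \<noteq> f'} \<subseteq>
      (\<lambda>(f, f'). inv f' \<otimes> f) ` (F \<times> F)"
    by auto
  ultimately show ?thesis
    using finite_subset by blast
qed

lemma quotients_subset:
  assumes "F \<subseteq> carrier G"
  shows "{inv f' \<otimes> f | f f'. f \<in> F \<and> f' \<in> F \<and> f \<noteq> f'} \<subseteq> carrier G - {\<one>}"
proof
  fix z assume "z \<in> {inv f' \<otimes> f | f f'. f \<in> F \<and> f' \<in> F \<and> f \<noteq> f'}"
  then obtain f f' where f: "f \<in> carrier G" "f' \<in> carrier G" "f \<noteq> f'" "z = inv f' \<otimes> f"
    using assms by blast
  moreover have "z \<noteq> \<one>"
  proof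
    assume "z = \<one>"
    then have "f' \<otimes> (inv f' \<otimes> f) = f'"
      using f by simp
    then show False
      using f by simp
  qed
  ultimately show "z \<in> carrier G - {\<one>}"
    by simp
qed

end

lemma (in group) finite_cosets_in_card_le:
  assumes "subgroup H G" "finite Ys" "Ys \<subseteq> carrier G" "A \<subseteq> (\<Union>y\<in>Ys. H #> y)"
  shows "finite (cosets_in G A H) \<and> card (cosets_in G A H) \<le> card Ys"
proof -
  have "cosets_in G A H \<subseteq> (\<lambda>y. H #> y) ` Ys"
  proof
    fix C assume "C \<in> cosets_in G A H"
    then obtain w where "w \<in> A" "C = H #> w"
      unfolding cosets_in_def by blast
    moreover obtain y where "y \<in> Ys" "w \<in> H #> y"
      using assms(4) \<open>w \<in> A\<close> by blast
    ultimately show "C \<in> (\<lambda>y. H #> y) ` Ys"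
      using repr_independence[of w H y] assms(1,3) by auto
  qed
  then show ?thesis
    using assms(2) by (meson card_image_le card_mono finite_imageI finite_subset le_trans)
qed

lemma (in group) exists_not_in_subgroup:
  assumes "subgroup H G" "infinite (cosets_in G A H) \<or> 2 \<le> card (cosets_in G A H)"
  shows "\<exists>w \<in> A. w \<notin> H"
proof (rule ccontr)
  assume "\<not> ?thesis"
  then have "A \<subseteq> (\<Union>y\<in>{\<one>}. H #> y)"
    using assms(1) coset_mult_one subgroup.subset by fastforce
  then show False
    using finite_cosets_in_card_le[OF assms(1), of "{\<one>}" A] assms(2) by auto
qed

lemma (in group) exists_not_in_two_cosets:
  assumes "subgroup H G" "A \<subseteq> carrier G" "y \<in> carrier G"
    and "infinite (cosets_in G A H) \<or> 3 \<le> card (cosets_in G A H)"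
  shows "\<exists>w \<in> A. w \<notin> H \<and> w \<otimes> y \<notin> H"
proof (rule ccontr)
  assume "\<not> ?thesis"
  then have "A \<subseteq> (\<Union>x\<in>{\<one>, inv y}. H #> x)"
    using assms(1-3) coset_mult_one subgroup.subset subgroup.rcos_module[OF assms(1) is_group]
    by fastforce
  moreover have "card {\<one>, inv y} \<le> 2"
    by (simp add: card_insert_if)
  ultimately show False
    using finite_cosets_in_card_le[OF assms(1), of "{\<one>, inv y}" A] assms(3,4) by auto
qed

section \<open>The ping-pong lemma\<close>

lemma (in group) word_prod_mult_mem_l_coset:
  assumes "S \<subseteq> carrier G" "Y \<subseteq> carrier G" "\<And>s. s \<in> S \<Longrightarrow> s <# Y \<subseteq> Y"
    and "set xs \<subseteq> S" "xs \<noteq> []" "y \<in> Y"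
  shows "word_prod G xs \<otimes> y \<in> hd xs <# Y"
proof -
  have "word_prod G ws \<otimes> y \<in> Y" if "set ws \<subseteq> S" for ws
    using that
  proof (induction ws)
    case (Cons s ws)
    have "word_prod G (s # ws) \<otimes> y = s \<otimes> (word_prod G ws \<otimes> y)"
      using Cons.prems assms(1,2,6) by (auto simp: m_assoc subset_iff)
    moreover have "s \<otimes> (word_prod G ws \<otimes> y) \<in> s <# Y"
      using Cons unfolding l_coset_def by auto
    ultimately show ?case
      using assms(3)[of s] Cons.prems by auto
  qed (use assms in auto)
  then show ?thesis
    using assms by (cases xs) (auto simp: l_coset_def m_assoc subset_iff)
qed

theorem (in group) free_semigroup_on_ping_pong:
  assumes S: "S \<subseteq> carrier G" and Y: "Y \<subseteq> carrier G"
    and into: "\<And>s. s \<in> S \<Longrightarrow> s <# Y \<subseteq> Y"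
    and disjoint: "\<And>s s'. s \<in> S \<Longrightarrow> s' \<in> S \<Longrightarrow> s \<noteq> s' \<Longrightarrow> (s <# Y) \<inter> (s' <# Y) = {}"
    and y0: "y0 \<in> Y" "\<And>s. s \<in> S \<Longrightarrow> y0 \<notin> s <# Y"
  shows "free_semigroup_on G S"
proof -
  note moves = word_prod_mult_mem_l_coset[OF S Y into _ _ y0(1)]
  have "xs = ys" if "set xs \<subseteq> S" "set ys \<subseteq> S" "word_prod G xs = word_prod G ys" for xs ys
    using that
  proof (induction xs arbitrary: ys)
    case Nil
    show ?case
    proof (rule ccontr)
      assume "[] \<noteq> ys"
      moreover have "word_prod G ys = \<one>" using Nil.prems by simp
      ultimately have "y0 \<in> hd ys <# Y" "hd ys \<in> S"
        using moves[of ys] Nil.prems y0(1) Y by auto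
      then show False using y0(2) by blast
    qed
  next
    case (Cons x xs)
    show ?case
    proof (cases ys)
      case Nil
      then have "y0 \<in> x <# Y"
        using moves[of "x # xs"] Cons.prems y0(1) Y by auto
      then show ?thesis using y0(2) Cons.prems by auto
    next
      case (Cons y ys')
      then have "word_prod G (x # xs) \<otimes> y0 \<in> (x <# Y) \<inter> (y <# Y)"
        using moves[of "x # xs"] moves[of ys] \<open>word_prod G (x # xs) = word_prod G ys\<close>
          \<open>set (x # xs) \<subseteq> S\<close> \<open>set ys \<subseteq> S\<close> by auto
      then have "x = y"
        using disjoint \<open>set (x # xs) \<subseteq> S\<close> \<open>set ys \<subseteq> S\<close> Cons by auto
      then have "word_prod G xs = word_prod G ys'"
        using Cons.prems \<open>ys = y # ys'\<close> S by (auto simp: subset_iff)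
      then show ?thesis
        using Cons.IH Cons.prems \<open>ys = y # ys'\<close> \<open>x = y\<close> by auto
    qed
  qed
  then show ?thesis
    unfolding free_semigroup_on_def by blast
qed

section \<open>Normal forms in an amalgamated product\<close>

locale amalgamated_product =
  fixes G :: "('a, 'b) monoid_scheme" (structure) and G0 G1 H :: "'a set"
  assumes amalgam: "amalgam G G0 G1 H"
begin

sublocale group G
  using amalgam by (simp add: amalgam_def)

lemma subgroup_H: "subgroup H G"
  using amalgam by (simp add: amalgam_def)

lemma generate_G0_G1: "generate G (G0 \<union> G1) = carrier G"
  using amalgam by (simp add: amalgam_def)

lemma H_subset_carrier: "H \<subseteq> carrier G"
  using subgroup.subset[OF subgroup_H] .

definition factor :: "nat \<Rightarrow> 'a set" where
  "factor j = (if even j then G0 else G1)"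

lemma factor_parity: "even i = even j \<Longrightarrow> factor i = factor j"
  by (simp add: factor_def)

lemma factor_Suc_Suc [simp]: "factor (Suc (Suc j)) = factor j"
  by (simp add: factor_def)

lemma G0_Un_G1: "G0 \<union> G1 = factor j \<union> factor (Suc j)"
  by (auto simp: factor_def)

lemma subgroup_factor: "subgroup (factor j) G"
  using amalgam by (simp add: amalgam_def factor_def)

lemma H_subset_factor: "H \<subseteq> factor j"
  using amalgam by (simp add: amalgam_def factor_def)

lemma factor_subset_carrier: "factor j \<subseteq> carrier G"
  using subgroup.subset[OF subgroup_factor] .

lemma factor_closed: "x \<in> factor j \<Longrightarrow> x \<in> carrier G"
  using factor_subset_carrier by blast

lemma H_closed: "h \<in> H \<Longrightarrow> h \<in> carrier G"
  using H_subset_carrier by blast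

lemma inv_mem_factor_diff_H: "x \<in> factor j - H \<Longrightarrow> inv x \<in> factor j - H"
  using subgroup.m_inv_closed[OF subgroup_factor] subgroup.m_inv_closed[OF subgroup_H]
    factor_subset_carrier by fastforce

lemma H_mult_mem_factor_diff_H:
  assumes h: "h \<in> H" and x: "x \<in> factor j - H"
  shows "h \<otimes> x \<in> factor j - H"
proof
  show "h \<otimes> x \<in> factor j"
    using h x H_subset_factor subgroup.m_closed[OF subgroup_factor] by blast
  have carrier: "h \<in> carrier G" "x \<in> carrier G"
    using h x H_subset_carrier factor_subset_carrier by auto
  show "h \<otimes> x \<notin> H"
  proof
    assume "h \<otimes> x \<in> H"
    then have "inv h \<otimes> (h \<otimes> x) \<in> H"
      using h subgroup.m_closed[OF subgroup_H] subgroup.m_inv_closed[OF subgroup_H] by blast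
    then show False using x carrier by simp
  qed
qed

lemma mult_H_mem_factor_diff_H:
  assumes x: "x \<in> factor j - H" and h: "h \<in> H"
  shows "x \<otimes> h \<in> factor j - H"
proof
  show "x \<otimes> h \<in> factor j"
    using h x H_subset_factor subgroup.m_closed[OF subgroup_factor] by blast
  have carrier: "h \<in> carrier G" "x \<in> carrier G"
    using h x H_subset_carrier factor_subset_carrier by auto
  show "x \<otimes> h \<notin> H"
  proof
    assume "x \<otimes> h \<in> H"
    then have "x \<otimes> h \<otimes> inv h \<in> H"
      using h subgroup.m_closed[OF subgroup_H] subgroup.m_inv_closed[OF subgroup_H] by blast
    then show False using x carrier by (simp add: m_assoc)
  qed
qed

abbreviation alt :: "nat \<Rightarrow> 'a list \<Rightarrow> bool" where
  "alt \<equiv> alt_word G0 G1 H"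

lemma alt_iff: "alt j xs \<longleftrightarrow> (\<forall>i < length xs. xs ! i \<in> factor (i + j) - H)"
  by (simp add: alt_word_def factor_def)

lemma alt_Nil [simp]: "alt j []"
  by (simp add: alt_iff)

lemma alt_Cons [simp]: "alt j (x # xs) \<longleftrightarrow> x \<in> factor j - H \<and> alt (Suc j) xs"
  by (simp add: alt_iff All_less_Suc2)

lemma alt_append: "alt j (xs @ ys) \<longleftrightarrow> alt j xs \<and> alt (j + length xs) ys"
  by (induction xs arbitrary: j) auto

lemma alt_parity: "even i = even j \<Longrightarrow> alt i xs = alt j xs"
  by (simp add: alt_word_def)

lemma alt_Suc_Suc [simp]: "alt (Suc (Suc j)) xs = alt j xs"
  by (rule alt_parity) simp

lemma alt_subset_carrier: "alt j xs \<Longrightarrow> set xs \<subseteq> carrier G"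
  using factor_subset_carrier by (induction xs arbitrary: j) auto

lemma alt_rev_map_inv: "alt j xs \<Longrightarrow> alt (Suc (j + length xs)) (rev (map (m_inv G) xs))"
proof (induction xs arbitrary: j)
  case (Cons x xs)
  have "factor (Suc (j + length (x # xs)) + length xs) = factor j"
    by (rule factor_parity) auto
  then show ?case
    using Cons.IH[of "Suc j"] Cons.prems inv_mem_factor_diff_H[of x j] by (simp add: alt_append)
qed simp

lemma alt_concat_replicate:
  "a \<in> factor j - H \<Longrightarrow> b \<in> factor (Suc j) - H \<Longrightarrow> alt j (concat (replicate n [a, b]))"
  by (induction n) auto

lemma word_prod_alt_notin_H:
  assumes "alt j xs" "xs \<noteq> []"
  shows "word_prod G xs \<notin> H"
proof -
  have "\<forall>j \<in> {0, 1}. \<forall>xs. xs \<noteq> [] \<and> alt j xs \<longrightarrow> word_prod G xs \<notin> H"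
    using amalgam unfolding amalgam_def by (elim conjE)
  moreover have "j mod 2 \<in> {0, 1}" by auto
  moreover have "even (j mod 2) = even j" by presburger
  then have "alt (j mod 2) xs"
    using alt_parity assms(1) by blast
  ultimately show ?thesis
    using assms(2) by auto
qed

definition reduced :: "nat \<Rightarrow> 'a set" where
  "reduced j = {word_prod G xs | xs. xs \<noteq> [] \<and> alt j xs}"

definition odd_reduced :: "nat \<Rightarrow> 'a set" where
  "odd_reduced j = {word_prod G xs | xs. alt j xs \<and> odd (length xs)}"

definition even_reduced :: "nat \<Rightarrow> 'a set" where
  "even_reduced j = {word_prod G xs | xs. alt j xs \<and> even (length xs) \<and> xs \<noteq> []}"

lemma reduced_parity: "even i = even j \<Longrightarrow> reduced i = reduced j"
  by (simp add: reduced_def alt_parity[of i j])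

lemma odd_reduced_parity: "even i = even j \<Longrightarrow> odd_reduced i = odd_reduced j"
  by (simp add: odd_reduced_def alt_parity[of i j])

lemma even_reduced_parity: "even i = even j \<Longrightarrow> even_reduced i = even_reduced j"
  by (simp add: even_reduced_def alt_parity[of i j])

lemma reduced_Suc_Suc [simp]: "reduced (Suc (Suc j)) = reduced j"
  by (rule reduced_parity) simp

lemma odd_reduced_Suc_Suc [simp]: "odd_reduced (Suc (Suc j)) = odd_reduced j"
  by (rule odd_reduced_parity) simp

lemma even_reduced_Suc_Suc [simp]: "even_reduced (Suc (Suc j)) = even_reduced j"
  by (rule even_reduced_parity) simp

lemma reduced_eq_odd_Un_even: "reduced j = odd_reduced j \<union> even_reduced j"
  unfolding reduced_def odd_reduced_def even_reduced_def by auto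

lemma reduced_subset_carrier: "reduced j \<subseteq> carrier G"
  unfolding reduced_def using alt_subset_carrier by auto

lemma reduced_notin_H: "x \<in> reduced j \<Longrightarrow> x \<notin> H"
  unfolding reduced_def using word_prod_alt_notin_H by blast

lemma reduced_closed: "x \<in> reduced j \<Longrightarrow> x \<in> carrier G"
  using reduced_subset_carrier by blast

lemma odd_reduced_closed: "x \<in> odd_reduced j \<Longrightarrow> x \<in> carrier G"
  using reduced_eq_odd_Un_even reduced_closed by blast

lemma odd_reduced_notin_H: "x \<in> odd_reduced j \<Longrightarrow> x \<notin> H"
  using reduced_eq_odd_Un_even reduced_notin_H by blast

lemma factor_diff_H_mem_odd_reduced:
  assumes "x \<in> factor j - H"
  shows "x \<in> odd_reduced j"
proof -
  have "x = word_prod G [x]"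
    using assms factor_closed[of x j] by simp
  then show ?thesis
    unfolding odd_reduced_def using assms by fastforce
qed

lemma word_prod_mult_mem_reduced:
  assumes xs: "alt j xs" "xs \<noteq> []" and y: "y \<in> H \<union> reduced (j + length xs)"
  shows "word_prod G xs \<otimes> y \<in> reduced j"
proof (cases "y \<in> H")
  case True
  obtain ys z where xs_eq: "xs = ys @ [z]"
    using xs(2) by (cases xs rule: rev_exhaust) auto
  have "alt j (ys @ [z \<otimes> y])"
    using xs(1) mult_H_mem_factor_diff_H True by (auto simp: xs_eq alt_append)
  moreover have "word_prod G xs \<otimes> y = word_prod G (ys @ [z \<otimes> y])"
    using alt_subset_carrier[OF xs(1)] True H_subset_carrier
    by (auto simp: xs_eq word_prod_append m_assoc)
  ultimately show ?thesis
    unfolding reduced_def by blast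
next
  case False
  then obtain zs where zs: "zs \<noteq> []" "alt (j + length xs) zs" "y = word_prod G zs"
    using y unfolding reduced_def by blast
  then have "alt j (xs @ zs)" "word_prod G xs \<otimes> y = word_prod G (xs @ zs)"
    using xs(1) alt_subset_carrier[OF xs(1)] alt_subset_carrier[OF zs(2)]
    by (auto simp: alt_append word_prod_append)
  then show ?thesis
    using zs(1) unfolding reduced_def by blast
qed

lemma H_mult_mem_reduced:
  assumes "h \<in> H" "y \<in> reduced j"
  shows "h \<otimes> y \<in> reduced j"
proof -
  obtain x xs where xs: "alt j (x # xs)" "y = word_prod G (x # xs)"
    using assms(2) unfolding reduced_def by (auto simp: neq_Nil_conv)
  have "h \<otimes> y = word_prod G ((h \<otimes> x) # xs)"
    using xs assms(1) H_subset_carrier alt_subset_carrier[OF xs(1)] by (auto simp: m_assoc)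
  moreover have "alt j ((h \<otimes> x) # xs)"
    using xs(1) assms(1) H_mult_mem_factor_diff_H by auto
  ultimately show ?thesis
    unfolding reduced_def by blast
qed

lemma factor_mult_mem_normal_form:
  assumes g: "g \<in> factor j" and y: "y \<in> H \<union> reduced j \<union> reduced (Suc j)"
  shows "g \<otimes> y \<in> H \<union> reduced j \<union> reduced (Suc j)"
proof (cases "g \<in> H")
  case True
  then show ?thesis
    using y H_mult_mem_reduced subgroup.m_closed[OF subgroup_H] by blast
next
  case g_notin_H: False
  have g_alt: "alt j [g]"
    using g g_notin_H by simp
  show ?thesis
  proof (cases "y \<in> reduced j")
    case False
    then have "y \<in> H \<union> reduced (j + length [g])"
      using y by simp
    then have "word_prod G [g] \<otimes> y \<in> reduced j"
      using word_prod_mult_mem_reduced[OF g_alt] by blast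
    then show ?thesis
      using factor_closed[OF g] by simp
  next
    case True
    then obtain x xs where xs: "alt j (x # xs)" "y = word_prod G (x # xs)"
      unfolding reduced_def by (auto simp: neq_Nil_conv)
    have carrier: "g \<in> carrier G" "x \<in> carrier G" "set xs \<subseteq> carrier G"
      using g factor_subset_carrier alt_subset_carrier[OF xs(1)] by auto
    have gx: "g \<otimes> x \<in> factor j"
      using g xs(1) subgroup.m_closed[OF subgroup_factor] by auto
    have y_eq: "g \<otimes> y = word_prod G ((g \<otimes> x) # xs)"
      using xs(2) carrier by (simp add: m_assoc)
    consider "g \<otimes> x \<notin> H" | "g \<otimes> x \<in> H" "xs = []" | "g \<otimes> x \<in> H" "xs \<noteq> []"
      by blast
    then show ?thesis
    proof cases
      case 1
      then have "g \<otimes> y \<in> reduced j"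
        using y_eq xs(1) gx unfolding reduced_def by fastforce
      then show ?thesis by blast
    next
      case 2
      then show ?thesis using y_eq carrier by simp
    next
      case 3
      then have "word_prod G xs \<in> reduced (Suc j)"
        using xs(1) unfolding reduced_def by auto
      then show ?thesis
        using H_mult_mem_reduced[OF 3(1)] y_eq by simp
    qed
  qed
qed

lemma carrier_eq_normal_form: "carrier G = H \<union> reduced j \<union> reduced (Suc j)"
proof
  let ?N = "H \<union> reduced j \<union> reduced (Suc j)"
  have N_sym: "?N = H \<union> reduced (Suc j) \<union> reduced (Suc (Suc j))"
    by auto
  have factor_mult: "g \<otimes> y \<in> ?N" if "g \<in> G0 \<union> G1" "y \<in> ?N" for g y
    using that factor_mult_mem_normal_form[of g j y] factor_mult_mem_normal_form[of g "Suc j" y]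
    unfolding G0_Un_G1[of j] N_sym by blast
  have N_carrier: "?N \<subseteq> carrier G"
    using H_subset_carrier reduced_subset_carrier by blast
  have "x \<in> generate G (G0 \<union> G1) \<Longrightarrow> \<forall>y \<in> ?N. x \<otimes> y \<in> ?N" for x
  proof (induction rule: generate.induct)
    case one
    then show ?case using N_carrier by auto
  next
    case (incl h)
    then show ?case using factor_mult by blast
  next
    case (inv h)
    then have "inv h \<in> G0 \<union> G1"
      using subgroup.m_inv_closed[OF subgroup_factor, of _ 0] subgroup.m_inv_closed[OF subgroup_factor, of _ 1]
      by (auto simp: factor_def)
    then show ?case using factor_mult by blast
  next
    case (eng a b)
    have "a \<in> carrier G" "b \<in> carrier G"
      using eng.hyps generate_G0_G1 by auto
    show ?case
    proof
      fix y assume y: "y \<in> ?N"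
      then have "a \<otimes> (b \<otimes> y) \<in> ?N"
        using eng.IH by blast
      then show "a \<otimes> b \<otimes> y \<in> ?N"
        using y N_carrier \<open>a \<in> carrier G\<close> \<open>b \<in> carrier G\<close> by (auto simp: m_assoc)
    qed
  qed
  then have "x \<otimes> \<one> \<in> ?N" if "x \<in> carrier G" for x
    using that generate_G0_G1 subgroup.one_closed[OF subgroup_H] by blast
  then show "carrier G \<subseteq> ?N"
    by (metis r_one subsetI)
  show "?N \<subseteq> carrier G"
    using N_carrier .
qed

lemma reduced_disjoint_reduced_Suc: "reduced j \<inter> reduced (Suc j) = {}"
proof (rule equals0I)
  fix x assume "x \<in> reduced j \<inter> reduced (Suc j)"
  then obtain xs ys where xs: "xs \<noteq> []" "alt j xs" "x = word_prod G xs"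
    and ys: "alt (Suc j) ys" "x = word_prod G ys"
    unfolding reduced_def by blast
  let ?zs = "rev (map (m_inv G) ys) @ xs"
  have "alt (Suc (Suc j + length ys)) (rev (map (m_inv G) ys))"
    using alt_rev_map_inv[OF ys(1)] .
  moreover have "alt (Suc (Suc j + length ys) + length ys) xs"
    using xs(2) alt_parity[of "Suc (Suc j + length ys) + length ys" j] by auto
  ultimately have "alt (Suc (Suc j + length ys)) ?zs"
    by (simp add: alt_append)
  moreover have "word_prod G ?zs = \<one>"
  proof -
    have "set xs \<subseteq> carrier G" "set ys \<subseteq> carrier G" "set (rev (map (m_inv G) ys)) \<subseteq> carrier G"
      using alt_subset_carrier[OF xs(2)] alt_subset_carrier[OF ys(1)] by auto
    then show ?thesis
      using xs(3) ys(2) by (simp add: word_prod_append word_prod_rev_map_inv)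
  qed
  ultimately show False
    using word_prod_alt_notin_H[of _ ?zs] xs(1) subgroup.one_closed[OF subgroup_H] by auto
qed

lemma reduced_disjoint_H_Un_reduced_Suc: "reduced j \<inter> (H \<union> reduced (Suc j)) = {}"
  using reduced_disjoint_reduced_Suc reduced_notin_H by blast

lemma odd_reduced_mult_mem_reduced:
  assumes "x \<in> odd_reduced j" "y \<in> H \<union> reduced (Suc j)"
  shows "x \<otimes> y \<in> reduced j"
proof -
  obtain xs where xs: "alt j xs" "odd (length xs)" "x = word_prod G xs"
    using assms(1) unfolding odd_reduced_def by blast
  have "reduced (j + length xs) = reduced (Suc j)"
    using xs(2) by (intro reduced_parity) simp
  moreover have "xs \<noteq> []"
    using xs(2) by auto
  ultimately show ?thesis
    using word_prod_mult_mem_reduced[OF xs(1)] xs(3) assms(2) by auto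
qed

lemma odd_reduced_l_coset: "x \<in> odd_reduced j \<Longrightarrow> x <# (H \<union> reduced (Suc j)) \<subseteq> reduced j"
  unfolding l_coset_def using odd_reduced_mult_mem_reduced by blast

lemma odd_reduced_l_coset_disjoint:
  "x \<in> odd_reduced j \<Longrightarrow> (x <# (H \<union> reduced (Suc j))) \<inter> (H \<union> reduced (Suc j)) = {}"
  using odd_reduced_l_coset reduced_disjoint_H_Un_reduced_Suc by blast

lemma odd_reduced_l_coset_disjoint_reduced_Suc:
  "x \<in> odd_reduced j \<Longrightarrow> (x <# reduced (Suc j)) \<inter> reduced (Suc j) = {}"
  using odd_reduced_l_coset[of x j] l_coset_mono[of "reduced (Suc j)" "H \<union> reduced (Suc j)" G x]
    reduced_disjoint_reduced_Suc[of j] by blast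

lemma odd_reduced_inv: "x \<in> odd_reduced j \<Longrightarrow> inv x \<in> odd_reduced j"
proof -
  assume "x \<in> odd_reduced j"
  then obtain xs where xs: "alt j xs" "odd (length xs)" "x = word_prod G xs"
    unfolding odd_reduced_def by blast
  have "alt j (rev (map (m_inv G) xs))"
    using alt_rev_map_inv[OF xs(1)] alt_parity[of "Suc (j + length xs)" j] xs(2) by auto
  moreover have "inv x = word_prod G (rev (map (m_inv G) xs))"
    using xs(3) alt_subset_carrier[OF xs(1)] by (simp add: word_prod_rev_map_inv)
  ultimately show ?thesis
    unfolding odd_reduced_def using xs(2) by auto
qed

lemma even_reduced_inv: "x \<in> even_reduced j \<Longrightarrow> inv x \<in> even_reduced (Suc j)"
proof -
  assume "x \<in> even_reduced j"
  then obtain xs where xs: "alt j xs" "even (length xs)" "xs \<noteq> []" "x = word_prod G xs"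
    unfolding even_reduced_def by blast
  have "alt (Suc j) (rev (map (m_inv G) xs))"
    using alt_rev_map_inv[OF xs(1)] alt_parity[of "Suc (j + length xs)" "Suc j"] xs(2) by auto
  moreover have "inv x = word_prod G (rev (map (m_inv G) xs))"
    using xs(4) alt_subset_carrier[OF xs(1)] by (simp add: word_prod_rev_map_inv)
  ultimately show ?thesis
    unfolding even_reduced_def using xs(2,3) by auto
qed

lemma even_reduced_snoc:
  assumes "x \<in> even_reduced j"
  obtains ys z where "alt j (ys @ [z])" "odd (length ys)" "x = word_prod G (ys @ [z])"
proof -
  obtain xs where xs: "alt j xs" "even (length xs)" "xs \<noteq> []" "x = word_prod G xs"
    using assms unfolding even_reduced_def by blast
  then obtain ys z where "xs = ys @ [z]"
    by (cases xs rule: rev_exhaust) auto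
  then show ?thesis
    using that xs by simp
qed

lemma conjugate_odd_reduced:
  assumes x: "x \<in> odd_reduced (Suc d)" and vs: "alt d vs"
  shows "conjugate G (word_prod G vs) x \<in> odd_reduced (Suc (d + length vs))"
proof -
  obtain xs where xs: "alt (Suc d) xs" "odd (length xs)" "x = word_prod G xs"
    using x unfolding odd_reduced_def by blast
  let ?ws = "rev (map (m_inv G) vs) @ xs @ vs"
  have "alt (Suc (d + length vs)) (rev (map (m_inv G) vs))"
    using alt_rev_map_inv[OF vs] .
  moreover have "alt (Suc (d + length vs) + length vs) xs"
    using xs(1) alt_parity[of "Suc (d + length vs) + length vs" "Suc d"] by auto
  moreover have "alt (Suc (d + length vs) + length vs + length xs) vs"
    using vs xs(2) alt_parity[of "Suc (d + length vs) + length vs + length xs" d] by auto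
  ultimately have "alt (Suc (d + length vs)) ?ws"
    by (simp add: alt_append add.assoc)
  moreover have "conjugate G (word_prod G vs) x = word_prod G ?ws"
  proof -
    have "set vs \<subseteq> carrier G" "set xs \<subseteq> carrier G" "set (rev (map (m_inv G) vs)) \<subseteq> carrier G"
      using alt_subset_carrier[OF vs] alt_subset_carrier[OF xs(1)] by auto
    then show ?thesis
      using xs(3) by (simp add: conjugate_def word_prod_append word_prod_rev_map_inv m_assoc)
  qed
  moreover have "odd (length ?ws)"
    using xs(2) by simp
  ultimately show ?thesis
    unfolding odd_reduced_def by blast
qed

lemma pow_mem_odd_reduced:
  assumes c: "c \<in> factor j - H" and a: "a \<in> factor (Suc j) - H" and c': "c' \<in> factor j - H"
    and c'c: "c' \<otimes> c \<notin> H" and "(m::nat) \<ge> 1"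
  shows "(c \<otimes> (a \<otimes> c')) [^] m \<in> odd_reduced j"
proof -
  obtain n where m: "m = Suc n"
    using \<open>m \<ge> 1\<close> by (cases m) auto
  have carrier: "c \<in> carrier G" "a \<in> carrier G" "c' \<in> carrier G"
    using c a c' factor_closed by auto
  let ?ws = "c # concat (replicate n [a, c' \<otimes> c]) @ [a, c']"
  have len: "length (concat (replicate n [a, c' \<otimes> c])) = 2 * n"
    by (induction n) auto
  have "c' \<otimes> c \<in> factor j - H"
    using c c' c'c subgroup.m_closed[OF subgroup_factor] by auto
  then have "alt (Suc j) (concat (replicate n [a, c' \<otimes> c]))"
    using a alt_concat_replicate by simp
  moreover have "alt (Suc j + 2 * n) [a, c']"
    using a c' factor_parity[of "Suc (j + 2 * n)" "Suc j"] factor_parity[of "j + 2 * n" j] by auto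
  ultimately have "alt j ?ws"
    using c len by (simp add: alt_append)
  moreover have "odd (length ?ws)"
    using len by simp
  moreover have "(c \<otimes> (a \<otimes> c')) [^] m = word_prod G ?ws"
    using carrier
    by (simp add: m nat_pow_mult_rotate word_prod_append word_prod_concat_replicate m_assoc)
  ultimately show ?thesis
    unfolding odd_reduced_def by blast
qed

lemma free_semigroup_on_conjugate_l_coset:
  assumes W: "W \<in> carrier G" and F: "F \<subseteq> carrier G" and c: "c \<in> factor d - H"
    and odd: "\<And>f. f \<in> F \<Longrightarrow> conjugate G W f \<in> odd_reduced (Suc d)"
    and odd_quotients: "\<And>f f'. f \<in> F \<Longrightarrow> f' \<in> F \<Longrightarrow> f \<noteq> f' \<Longrightarrow>
      conjugate G W (inv f' \<otimes> f) \<in> odd_reduced (Suc d)"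
  shows "free_semigroup_on G ((W \<otimes> c \<otimes> inv W) <# F)"
proof -
  have c_carrier: "c \<in> carrier G" and c_odd: "c \<in> odd_reduced d"
    using c factor_closed factor_diff_H_mem_odd_reduced by auto
  define A where "A = H \<union> reduced d"
  define g where "g = W \<otimes> c \<otimes> inv W"
  have A: "A \<subseteq> carrier G"
    using H_subset_carrier reduced_subset_carrier unfolding A_def by blast
  have g: "g \<in> carrier G"
    using W c_carrier unfolding g_def by simp
  have S: "g <# F \<subseteq> carrier G" and Y: "W <# A \<subseteq> carrier G"
    using l_coset_subset_G F g W A by auto
  have moved: "(g \<otimes> f) <# (W <# A) = W <# (c <# (conjugate G W f <# A))" if "f \<in> F" for f
    using that F W c_carrier A
    by (simp add: g_def lcos_m_assoc l_coset_subset_G conjugate_def m_assoc subset_iff)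
  have into_reduced: "(g \<otimes> f) <# (W <# A) \<subseteq> W <# reduced d" if "f \<in> F" for f
  proof -
    have "conjugate G W f <# A \<subseteq> H \<union> reduced (Suc d)"
      using odd_reduced_l_coset[OF odd] that unfolding A_def by fastforce
    then have "c <# (conjugate G W f <# A) \<subseteq> c <# (H \<union> reduced (Suc d))"
      by (rule l_coset_mono)
    also have "\<dots> \<subseteq> reduced d"
      by (rule odd_reduced_l_coset[OF c_odd])
    finally show ?thesis
      by (simp add: moved[OF that] l_coset_mono)
  qed
  show ?thesis
    unfolding g_def[symmetric]
  proof (rule free_semigroup_on_ping_pong[OF S Y])
    fix s assume "s \<in> g <# F"
    then obtain f where f: "f \<in> F" "s = g \<otimes> f"
      unfolding l_coset_def by blast
    show "s <# (W <# A) \<subseteq> W <# A"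
      using into_reduced[OF f(1)] f(2) unfolding A_def l_coset_def by blast
    have "W \<notin> W <# reduced d"
      using W reduced_subset_carrier reduced_notin_H subgroup.one_closed[OF subgroup_H]
      by (auto simp: mem_l_coset_iff)
    then show "W \<notin> s <# (W <# A)"
      using into_reduced[OF f(1)] f(2) by blast
  next
    fix s s' assume "s \<in> g <# F" "s' \<in> g <# F" "s \<noteq> s'"
    then obtain f f' where f: "f \<in> F" "f' \<in> F" "f \<noteq> f'" "s = g \<otimes> f" "s' = g \<otimes> f'"
      unfolding l_coset_def by blast
    have carrier: "f \<in> carrier G" "f' \<in> carrier G"
      using f F by auto
    have "inv (g \<otimes> f' \<otimes> W) \<otimes> (g \<otimes> f \<otimes> W) = conjugate G W (inv f' \<otimes> f)"
      using carrier g W by (simp add: conjugate_def inv_mult_group m_assoc)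
    moreover have "conjugate G W (inv f' \<otimes> f) \<in> odd_reduced (Suc d)"
      using odd_quotients f(1-3) .
    then have "(conjugate G W (inv f' \<otimes> f) <# A) \<inter> A = {}"
      using odd_reduced_l_coset_disjoint unfolding A_def by fastforce
    ultimately show "(s <# (W <# A)) \<inter> (s' <# (W <# A)) = {}"
      using f carrier g W A by (simp add: lcos_m_assoc l_coset_disjoint_iff)
  next
    show "W \<in> W <# A"
      using W A subgroup.one_closed[OF subgroup_H] unfolding A_def by (simp add: mem_l_coset_iff)
  qed
qed

definition three_cosets :: "nat \<Rightarrow> bool" where
  "three_cosets j \<longleftrightarrow> infinite (cosets_in G (factor j) H) \<or> 3 \<le> card (cosets_in G (factor j) H)"

lemma three_cosets_avoid:
  "three_cosets j \<Longrightarrow> y \<in> factor j \<Longrightarrow> \<exists>w \<in> factor j - H. w \<otimes> y \<notin> H"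
  using exists_not_in_two_cosets[OF subgroup_H factor_subset_carrier] factor_closed
  unfolding three_cosets_def by blast

section \<open>The groups \<open>K\<^sub>j\<close>\<close>

lemma UN_T_set: "(\<Union>k. T_set G G0 G1 H j k) = H \<union> reduced j"
proof
  show "(\<Union>k. T_set G G0 G1 H j k) \<subseteq> H \<union> reduced j"
    unfolding T_set_def reduced_def by (auto split: if_splits)
  have "H \<subseteq> T_set G G0 G1 H j 0"
    by (simp add: T_set_def)
  moreover have "x \<in> T_set G G0 G1 H j (length xs)" if "xs \<noteq> []" "alt j xs" "x = word_prod G xs" for x xs
    using that by (auto simp: T_set_def)
  ultimately show "H \<union> reduced j \<subseteq> (\<Union>k. T_set G G0 G1 H j k)"
    unfolding reduced_def by blast
qed

lemma mem_K_set_iff: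
  "x \<in> K_set G G0 G1 H j \<longleftrightarrow> x \<in> carrier G \<and> (\<forall>t \<in> H \<union> reduced j. conjugate G t x \<in> H)"
proof -
  have K: "x \<in> K_set G G0 G1 H j \<longleftrightarrow> (\<forall>t \<in> H \<union> reduced j. x \<in> conj_set G t H)"
    unfolding K_set_def C_set_def UN_T_set[symmetric] by blast
  have "\<one> \<in> H \<union> reduced j"
    using subgroup.one_closed[OF subgroup_H] by blast
  moreover have "conj_set G \<one> H \<subseteq> carrier G"
    unfolding conj_set_def using H_closed by auto
  moreover have "H \<union> reduced j \<subseteq> carrier G"
    using H_subset_carrier reduced_subset_carrier by blast
  ultimately show ?thesis
    unfolding K using mem_conj_set_iff[OF _ _ H_subset_carrier] by blast
qed

lemma K_set_parity: "even i = even j \<Longrightarrow> K_set G G0 G1 H i = K_set G G0 G1 H j"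
  using reduced_parity[of i j] by (auto simp: mem_K_set_iff)

definition H_escapes :: bool where
  "H_escapes \<longleftrightarrow> (\<forall>y \<in> H - {\<one>}. \<forall>d. \<exists>vs. alt d vs \<and> conjugate G (word_prod G vs) y \<notin> H)"

lemma H_escapes_if_K_set_trivial:
  assumes "K_set G G0 G1 H 0 = {\<one>}" "K_set G G0 G1 H 1 = {\<one>}"
  shows H_escapes
  unfolding H_escapes_def
proof (intro ballI allI)
  fix y d assume y: "y \<in> H - {\<one>}"
  have "K_set G G0 G1 H d = {\<one>}"
    using assms K_set_parity[of d 0] K_set_parity[of d 1] by (cases "even d") auto
  then have "y \<notin> K_set G G0 G1 H d"
    using y by simp
  then obtain t where t: "t \<in> H \<union> reduced d" "conjugate G t y \<notin> H"
    using y H_closed[of y] unfolding mem_K_set_iff by blast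
  have "t \<notin> H"
    using t(2) y subgroup_conjugate_closed[OF subgroup_H] by blast
  then show "\<exists>vs. alt d vs \<and> conjugate G (word_prod G vs) y \<notin> H"
    using t unfolding reduced_def by blast
qed

section \<open>Conjugating into odd reduced words\<close>

text \<open>
  The conjugating word starts in factor \<open>d\<close>, and the conjugate must be an odd reduced word in
  the factor opposite to the word's last letter. Conjugating further by a reduced word that
  continues the conjugator preserves this (\<open>conjugate_odd_reduced\<close>), which is what lets the
  conjugators of several elements be concatenated.
\<close>

definition odd_conjugable :: "nat \<Rightarrow> 'a \<Rightarrow> bool" where
  "odd_conjugable d x \<longleftrightarrow>
     (\<exists>vs. alt d vs \<and> conjugate G (word_prod G vs) x \<in> odd_reduced (Suc (d + length vs)))"

lemma odd_conjugable_if_odd_reduced: "x \<in> odd_reduced (Suc d) \<Longrightarrow> odd_conjugable d x"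
  unfolding odd_conjugable_def using odd_reduced_closed[of x "Suc d"]
  by (intro exI[of _ "[]"]) auto

lemma odd_conjugable_step:
  assumes v: "v \<in> factor d - H" and x: "x \<in> carrier G"
    and "odd_conjugable (Suc d) (conjugate G v x)"
  shows "odd_conjugable d x"
proof -
  obtain vs where vs: "alt (Suc d) vs"
    "conjugate G (word_prod G vs) (conjugate G v x) \<in> odd_reduced (Suc (Suc d + length vs))"
    using assms(3) unfolding odd_conjugable_def by blast
  have "conjugate G (word_prod G (v # vs)) x = conjugate G (word_prod G vs) (conjugate G v x)"
    using v x factor_closed[of v d] alt_subset_carrier[OF vs(1)] by (simp add: conjugate_mult)
  then show ?thesis
    unfolding odd_conjugable_def using v vs by (intro exI[of _ "v # vs"]) simp
qed

lemma odd_conjugable_inv: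
  assumes "x \<in> carrier G" "odd_conjugable d x"
  shows "odd_conjugable d (inv x)"
proof -
  obtain vs where vs: "alt d vs" "conjugate G (word_prod G vs) x \<in> odd_reduced (Suc (d + length vs))"
    using assms(2) unfolding odd_conjugable_def by blast
  then have "conjugate G (word_prod G vs) (inv x) \<in> odd_reduced (Suc (d + length vs))"
    using odd_reduced_inv assms(1) alt_subset_carrier[OF vs(1)] by (simp add: conjugate_inv)
  then show ?thesis
    unfolding odd_conjugable_def using vs(1) by blast
qed

lemma conjugate_H_mem_odd_reduced:
  "y \<in> H \<Longrightarrow> alt d vs \<Longrightarrow> conjugate G (word_prod G vs) y \<notin> H \<Longrightarrow>
    conjugate G (word_prod G vs) y \<in> odd_reduced (Suc (d + length vs))"
proof (induction vs arbitrary: y d)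
  case Nil
  then show ?case using H_closed by simp
next
  case (Cons v vs)
  have v: "v \<in> factor d - H" and vs: "alt (Suc d) vs"
    using Cons.prems(2) by auto
  have carrier: "v \<in> carrier G" "y \<in> carrier G" "set vs \<subseteq> carrier G"
    using v factor_closed H_closed[OF Cons.prems(1)] alt_subset_carrier[OF vs] by auto
  then have eq: "conjugate G (word_prod G (v # vs)) y = conjugate G (word_prod G vs) (conjugate G v y)"
    by (simp add: conjugate_mult)
  show ?case
  proof (cases "conjugate G v y \<in> H")
    case True
    then show ?thesis
      using Cons.IH[OF True vs] Cons.prems(3) eq by simp
  next
    case False
    have "conjugate G v y \<in> factor d"
      using v Cons.prems(1) H_subset_factor subgroup_conjugate_closed[OF subgroup_factor] by blast
    then have "conjugate G v y \<in> odd_reduced (Suc (Suc d))"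
      using False factor_diff_H_mem_odd_reduced by simp
    from conjugate_odd_reduced[OF this vs] show ?thesis
      using eq by simp
  qed
qed

lemma conjugate_even_reduced:
  assumes xs: "alt (Suc d) (ys @ [z])" "odd (length ys)" and v: "v \<in> factor d - H"
  shows "conjugate G v (word_prod G (ys @ [z])) \<in> odd_reduced d \<union> even_reduced d"
    and "z \<otimes> v \<notin> H \<Longrightarrow> conjugate G v (word_prod G (ys @ [z])) \<in> odd_reduced d"
proof -
  have ys: "alt (Suc d) ys" and z: "z \<in> factor d - H"
    using xs factor_parity[of "Suc d + length ys" d] by (auto simp: alt_append)
  have carrier: "v \<in> carrier G" "z \<in> carrier G" "set ys \<subseteq> carrier G"
    using v z factor_closed alt_subset_carrier[OF ys] by auto
  have zv: "z \<otimes> v \<in> factor d"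
    using z v subgroup.m_closed[OF subgroup_factor] by blast
  have eq: "conjugate G v (word_prod G (ys @ [z])) = inv v \<otimes> (word_prod G ys \<otimes> (z \<otimes> v))"
    using carrier by (simp add: conjugate_def word_prod_append m_assoc)
  have inv_v: "inv v \<in> factor d - H"
    using inv_mem_factor_diff_H[OF v] .
  show odd: "conjugate G v (word_prod G (ys @ [z])) \<in> odd_reduced d" if "z \<otimes> v \<notin> H"
  proof -
    have "alt (Suc d + length ys) [z \<otimes> v]"
      using zv that factor_parity[of "Suc d + length ys" d] xs(2) by auto
    then have "alt d (inv v # ys @ [z \<otimes> v])"
      using inv_v ys by (simp add: alt_append)
    moreover have "conjugate G v (word_prod G (ys @ [z])) = word_prod G (inv v # ys @ [z \<otimes> v])"
      using eq carrier by (simp add: word_prod_append)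
    ultimately show ?thesis
      unfolding odd_reduced_def using xs(2) by fastforce
  qed
  show "conjugate G v (word_prod G (ys @ [z])) \<in> odd_reduced d \<union> even_reduced d"
  proof (cases "z \<otimes> v \<in> H")
    case True
    obtain ws u where ys_eq: "ys = ws @ [u]"
      using xs(2) by (cases ys rule: rev_exhaust) auto
    have "alt (Suc d) (ws @ [u \<otimes> (z \<otimes> v)])"
      using ys mult_H_mem_factor_diff_H True by (auto simp: ys_eq alt_append)
    then have "alt d (inv v # ws @ [u \<otimes> (z \<otimes> v)])"
      using inv_v by simp
    moreover have "conjugate G v (word_prod G (ys @ [z])) = word_prod G (inv v # ws @ [u \<otimes> (z \<otimes> v)])"
      using eq carrier by (simp add: ys_eq word_prod_append m_assoc)
    moreover have "even (length (inv v # ws @ [u \<otimes> (z \<otimes> v)]))"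
      using xs(2) ys_eq by simp
    ultimately show ?thesis
      unfolding even_reduced_def by blast
  qed (use odd in blast)
qed

end

locale nondegenerate_amalgam = amalgamated_product +
  assumes nondegenerate: "nondegenerate G G0 G1 H"
begin

lemma factor_diff_H_nonempty: "\<exists>a. a \<in> factor j - H"
proof -
  have "infinite (cosets_in G (factor j) H) \<or> 2 \<le> card (cosets_in G (factor j) H)"
    using nondegenerate unfolding nondegenerate_def Let_def factor_def by auto
  then show ?thesis
    using exists_not_in_subgroup[OF subgroup_H] by blast
qed

lemma three_cosets_or_Suc: "three_cosets j \<or> three_cosets (Suc j)"
proof -
  have "three_cosets 0 \<or> three_cosets 1"
    using nondegenerate unfolding nondegenerate_def Let_def three_cosets_def factor_def
    by (auto simp: not_le numeral_3_eq_3 less_Suc_eq)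
  then show ?thesis
    unfolding three_cosets_def factor_def by auto
qed

lemma even_reduced_Suc_odd_conjugable:
  assumes "x \<in> even_reduced (Suc d)"
  shows "odd_conjugable d x"
proof -
  \<comment> \<open>With three cosets the conjugating letter can avoid merging with the last letter of \<open>x\<close>;
    otherwise the next factor has three cosets and one more letter suffices.\<close>
  have three: "odd_conjugable e x"
    if three_e: "three_cosets e" and x_e: "x \<in> even_reduced (Suc e)" for e x
  proof -
    obtain ys z where xs: "alt (Suc e) (ys @ [z])" "odd (length ys)" "x = word_prod G (ys @ [z])"
      using even_reduced_snoc[OF x_e] .
    have z: "z \<in> factor e"
      using xs(1,2) factor_parity[of "Suc e + length ys" e] by (simp add: alt_append)
    obtain w where w: "w \<in> factor e - H" "w \<otimes> inv z \<notin> H"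
      using three_cosets_avoid[OF three_e] z subgroup.m_inv_closed[OF subgroup_factor] by blast
    have "z \<otimes> inv w = inv (w \<otimes> inv z)"
      using w z factor_closed[of z e] factor_closed[of w e] by (simp add: inv_mult_group)
    then have "z \<otimes> inv w \<notin> H"
      using w(2) subgroup.m_inv_closed[OF subgroup_H] factor_closed z w(1)
      by (metis DiffD1 inv_closed inv_inv m_closed)
    then have "conjugate G (inv w) x \<in> odd_reduced (Suc (Suc e))"
      using conjugate_even_reduced(2)[OF xs(1,2) inv_mem_factor_diff_H[OF w(1)]] xs(3) by simp
    moreover have "x \<in> carrier G"
      using xs(3) alt_subset_carrier[OF xs(1)] by simp
    ultimately show ?thesis
      using odd_conjugable_step[OF inv_mem_factor_diff_H[OF w(1)]] odd_conjugable_if_odd_reduced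
      by blast
  qed
  show ?thesis
  proof (cases "three_cosets d")
    case True
    then show ?thesis using three assms by blast
  next
    case False
    then have "three_cosets (Suc d)"
      using three_cosets_or_Suc by blast
    obtain v where v: "v \<in> factor d - H"
      using factor_diff_H_nonempty by blast
    obtain ys z where xs: "alt (Suc d) (ys @ [z])" "odd (length ys)" "x = word_prod G (ys @ [z])"
      using even_reduced_snoc[OF assms] .
    have "conjugate G v x \<in> odd_reduced (Suc (Suc d)) \<union> even_reduced (Suc (Suc d))"
      using conjugate_even_reduced(1)[OF xs(1,2) v] xs(3) by simp
    then have "odd_conjugable (Suc d) (conjugate G v x)"
      using odd_conjugable_if_odd_reduced three[OF \<open>three_cosets (Suc d)\<close>] by blast
    moreover have "x \<in> carrier G"
      using xs(3) alt_subset_carrier[OF xs(1)] by simp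
    ultimately show ?thesis
      using odd_conjugable_step[OF v] by blast
  qed
qed

lemma even_reduced_odd_conjugable: "x \<in> even_reduced d \<Longrightarrow> odd_conjugable d x"
  using even_reduced_Suc_odd_conjugable[OF even_reduced_inv] odd_conjugable_inv[of "inv x" d]
    reduced_eq_odd_Un_even reduced_subset_carrier
  by (metis UnCI inv_closed inv_inv subsetD)

lemma odd_reduced_odd_conjugable:
  "alt d xs \<Longrightarrow> odd (length xs) \<Longrightarrow> odd_conjugable d (word_prod G xs)"
proof (induction "length xs" arbitrary: xs d rule: less_induct)
  case less
  obtain z0 rest where xs: "xs = z0 # rest"
    using less.prems(2) by (cases xs) auto
  have z0: "z0 \<in> factor d - H" and rest: "alt (Suc d) rest"
    using less.prems(1) xs by auto
  have x_carrier: "word_prod G xs \<in> carrier G"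
    using alt_subset_carrier[OF less.prems(1)] by simp
  show ?case
  proof (cases rest rule: rev_exhaust)
    case Nil
    then have "conjugate G z0 (word_prod G xs) \<in> odd_reduced (Suc (Suc d))"
      using xs z0 factor_closed factor_diff_H_mem_odd_reduced by auto
    then show ?thesis
      using odd_conjugable_step[OF z0 x_carrier] odd_conjugable_if_odd_reduced by blast
  next
    case (snoc ms z1)
    have ms: "alt (Suc d) ms" and odd_ms: "odd (length ms)"
      using rest less.prems(2) xs snoc by (auto simp: alt_append)
    have z1: "z1 \<in> factor d - H"
      using rest snoc odd_ms factor_parity[of "Suc d + length ms" d] by (auto simp: alt_append)
    have carrier: "z0 \<in> carrier G" "z1 \<in> carrier G" "set ms \<subseteq> carrier G"
      using z0 z1 factor_closed alt_subset_carrier[OF ms] by auto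
    have eq: "conjugate G (inv z1) (word_prod G xs) = z1 \<otimes> z0 \<otimes> word_prod G ms"
      using xs snoc carrier by (simp add: conjugate_def word_prod_append m_assoc)
    have z1z0: "z1 \<otimes> z0 \<in> factor d"
      using z0 z1 subgroup.m_closed[OF subgroup_factor] by blast
    have "odd_conjugable (Suc d) (conjugate G (inv z1) (word_prod G xs))"
    proof (cases "z1 \<otimes> z0 \<in> H")
      case False
      then have "alt d ((z1 \<otimes> z0) # ms)"
        using z1z0 ms by simp
      moreover have "even (length ((z1 \<otimes> z0) # ms))"
        using odd_ms by simp
      ultimately have "word_prod G ((z1 \<otimes> z0) # ms) \<in> even_reduced d"
        unfolding even_reduced_def by blast
      then show ?thesis
        using eq even_reduced_Suc_odd_conjugable[where d = "Suc d"] by simp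
    next
      case True
      obtain m0 ms' where ms_eq: "ms = m0 # ms'"
        using odd_ms by (cases ms) auto
      have "alt (Suc d) ((z1 \<otimes> z0 \<otimes> m0) # ms')"
        using ms ms_eq H_mult_mem_factor_diff_H[OF True, of m0 "Suc d"] by simp
      moreover have "length ((z1 \<otimes> z0 \<otimes> m0) # ms') < length xs"
        using xs snoc ms_eq by simp
      moreover have "odd (length ((z1 \<otimes> z0 \<otimes> m0) # ms'))"
        using odd_ms ms_eq by simp
      moreover have "word_prod G ((z1 \<otimes> z0 \<otimes> m0) # ms') = z1 \<otimes> z0 \<otimes> word_prod G ms"
        using ms_eq carrier by (simp add: m_assoc)
      ultimately show ?thesis
        using less.hyps eq by metis
    qed
    then show ?thesis
      using odd_conjugable_step[OF inv_mem_factor_diff_H[OF z1] x_carrier] by blast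
  qed
qed

lemma odd_conjugable_if_H_escapes:
  assumes H_escapes "x \<in> carrier G" "x \<noteq> \<one>"
  shows "odd_conjugable d x"
proof -
  consider "x \<in> H" | "x \<in> odd_reduced d" | "x \<in> even_reduced d"
    | "x \<in> odd_reduced (Suc d)" | "x \<in> even_reduced (Suc d)"
    using assms(2) carrier_eq_normal_form[of d] reduced_eq_odd_Un_even by blast
  then show ?thesis
  proof cases
    case 1
    then obtain vs where "alt d vs" "conjugate G (word_prod G vs) x \<notin> H"
      using assms unfolding H_escapes_def by blast
    then show ?thesis
      using conjugate_H_mem_odd_reduced[OF 1] unfolding odd_conjugable_def by blast
  next
    case 2
    then show ?thesis
      using odd_reduced_odd_conjugable unfolding odd_reduced_def by blast
  qed (use even_reduced_odd_conjugable odd_conjugable_if_odd_reduced even_reduced_Suc_odd_conjugable in blast)+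
qed

lemma simultaneous_conjugate_odd_reduced:
  assumes H_escapes "finite F" "F \<subseteq> carrier G - {\<one>}"
  shows "\<exists>ws. alt 0 ws \<and> (\<forall>f\<in>F. conjugate G (word_prod G ws) f \<in> odd_reduced (Suc (length ws)))"
  using assms(2,3)
proof (induction F rule: finite_induct)
  case empty
  show ?case by (intro exI[of _ "[]"]) simp
next
  case (insert f F)
  then obtain ws where ws: "alt 0 ws"
    "\<forall>g\<in>F. conjugate G (word_prod G ws) g \<in> odd_reduced (Suc (length ws))"
    by blast
  have carrier: "set ws \<subseteq> carrier G" "f \<in> carrier G" "f \<noteq> \<one>"
    using alt_subset_carrier[OF ws(1)] insert.prems by auto
  then have "conjugate G (word_prod G ws) f \<in> carrier G" "conjugate G (word_prod G ws) f \<noteq> \<one>"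
    by (auto simp: conjugate_eq_one_iff)
  then obtain vs where vs: "alt (length ws) vs" "conjugate G (word_prod G vs)
      (conjugate G (word_prod G ws) f) \<in> odd_reduced (Suc (length ws + length vs))"
    using odd_conjugable_if_H_escapes[OF assms(1)] unfolding odd_conjugable_def by blast
  have conj_append: "conjugate G (word_prod G (ws @ vs)) g =
      conjugate G (word_prod G vs) (conjugate G (word_prod G ws) g)" if "g \<in> carrier G" for g
    using that carrier alt_subset_carrier[OF vs(1)] by (simp add: word_prod_append conjugate_mult)
  have "conjugate G (word_prod G (ws @ vs)) g \<in> odd_reduced (Suc (length (ws @ vs)))"
    if "g \<in> insert f F" for g
  proof (cases "g = f")
    case False
    then show ?thesis
      using that conj_append insert.prems conjugate_odd_reduced[OF _ vs(1)] ws(2) by auto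
  qed (use vs(2) conj_append carrier in simp)
  moreover have "alt 0 (ws @ vs)"
    using ws(1) vs(1) by (simp add: alt_append)
  ultimately show ?case by blast
qed

lemma exists_conjugate_odd_reduced:
  assumes H_escapes "finite F" "F \<subseteq> carrier G - {\<one>}"
  obtains W d where "W \<in> carrier G" "three_cosets d"
    "\<And>f. f \<in> F \<Longrightarrow> conjugate G W f \<in> odd_reduced (Suc d)"
proof -
  obtain ws where ws: "alt 0 ws"
    "\<And>f. f \<in> F \<Longrightarrow> conjugate G (word_prod G ws) f \<in> odd_reduced (Suc (length ws))"
    using simultaneous_conjugate_odd_reduced[OF assms] by blast
  have W: "word_prod G ws \<in> carrier G"
    using alt_subset_carrier[OF ws(1)] by simp
  show ?thesis
  proof (cases "three_cosets (length ws)")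
    case True
    then show ?thesis using that W ws(2) by blast
  next
    case False
    then have three: "three_cosets (Suc (length ws))"
      using three_cosets_or_Suc by blast
    obtain a where a: "a \<in> factor (length ws) - H"
      using factor_diff_H_nonempty by blast
    then have a_alt: "alt (length ws) [a]" and a_carrier: "a \<in> carrier G"
      using factor_closed by auto
    have "conjugate G (word_prod G ws \<otimes> a) f \<in> odd_reduced (Suc (Suc (length ws)))" if "f \<in> F" for f
      using conjugate_odd_reduced[OF ws(2)[OF that] a_alt] W a_carrier that assms(3)
      by (auto simp: conjugate_mult)
    then show ?thesis
      using that[OF _ three] W a_carrier by blast
  qed
qed

lemma exists_pow_odd_reduced:
  assumes "three_cosets d"
  obtains P where "P \<in> carrier G" "\<And>m::nat. m \<ge> 1 \<Longrightarrow> P [^] m \<in> odd_reduced d"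
proof -
  obtain c where c: "c \<in> factor d - H"
    using factor_diff_H_nonempty by blast
  obtain c' where c': "c' \<in> factor d - H" "c' \<otimes> c \<notin> H"
    using three_cosets_avoid[OF assms] c by blast
  obtain a where a: "a \<in> factor (Suc d) - H"
    using factor_diff_H_nonempty by blast
  show ?thesis
  proof (rule that)
    show "c \<otimes> (a \<otimes> c') \<in> carrier G"
      using a c c' factor_closed by blast
    show "(c \<otimes> (a \<otimes> c')) [^] m \<in> odd_reduced d" if "m \<ge> 1" for m :: nat
      using pow_mem_odd_reduced[OF c a c'(1,2) that] .
  qed
qed

section \<open>The equivalent conditions and their consequences\<close>

theorem conj_set_disjoint_H_if_H_escapes:
  assumes H_escapes "finite F" "F \<subseteq> carrier G - {\<one>}"
  shows "\<exists>g \<in> carrier G. conj_set G g F \<inter> H = {}"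
proof -
  obtain W d where W: "W \<in> carrier G" "\<And>f. f \<in> F \<Longrightarrow> conjugate G W f \<in> odd_reduced (Suc d)"
    using exists_conjugate_odd_reduced[OF assms] by blast
  then have "conj_set G (inv W) F \<inter> H = {}"
    using odd_reduced_notin_H by (auto simp: conj_set_inv_eq)
  then show ?thesis
    using W(1) by blast
qed

theorem powers_group_if_H_escapes:
  assumes H_escapes
  shows "powers_group G"
  unfolding powers_group_def
proof (intro allI impI)
  fix F and k :: nat
  assume F: "finite F \<and> F \<subseteq> carrier G - {\<one>} \<and> 1 \<le> k"
  obtain W d where W: "W \<in> carrier G" "three_cosets d"
    "\<And>f. f \<in> F \<Longrightarrow> conjugate G W f \<in> odd_reduced (Suc d)"
    using exists_conjugate_odd_reduced[OF assms] F by blast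
  define A where "A = H \<union> reduced d"
  define B where "B = reduced (Suc d)"
  have AB: "A \<subseteq> carrier G" "B \<subseteq> carrier G" "A \<inter> B = {}" "A \<union> B = carrier G"
    using H_subset_carrier reduced_subset_carrier reduced_disjoint_H_Un_reduced_Suc[of "Suc d"]
      carrier_eq_normal_form[of d]
    unfolding A_def B_def by auto
  obtain P where P: "P \<in> carrier G" "\<And>m::nat. m \<ge> 1 \<Longrightarrow> P [^] m \<in> odd_reduced d"
    using exists_pow_odd_reduced[OF W(2)] by blast
  define g where "g i = W \<otimes> P [^] i \<otimes> inv W" for i :: nat
  have D_Un_E: "(W <# A) \<union> (W <# B) = carrier G"
    using AB W(1) by (auto simp: mem_l_coset_iff l_coset_subset_G)
  have D_Int_E: "(W <# A) \<inter> (W <# B) = {}"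
    using AB W(1) by (simp add: l_coset_disjoint_iff lcos_mult_one)
  have D_moved: "(f <# (W <# A)) \<inter> (W <# A) = {}" if "f \<in> F" for f
  proof -
    have "f \<in> carrier G" using that F by blast
    moreover have "(conjugate G W f <# A) \<inter> A = {}"
      using odd_reduced_l_coset_disjoint[OF W(3)[OF that]] unfolding A_def by simp
    ultimately show ?thesis
      using W(1) AB(1) by (simp add: lcos_m_assoc l_coset_disjoint_iff conjugate_def m_assoc)
  qed
  have g_carrier: "g i \<in> carrier G" for i
    using W(1) P(1) by (simp add: g_def)
  have "(g j <# (W <# B)) \<inter> (g i <# (W <# B)) = {}" if "i < j" for i j
  proof -
    have "P [^] j = P [^] i \<otimes> P [^] (j - i)"
      using nat_pow_mult[OF P(1), of i "j - i"] that by simp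
    then have "inv (P [^] i) \<otimes> P [^] j = P [^] (j - i)"
      using P(1) by (simp add: m_assoc)
    moreover have "(P [^] (j - i) <# B) \<inter> B = {}"
      using odd_reduced_l_coset_disjoint_reduced_Suc P(2) that unfolding B_def by simp
    ultimately show ?thesis
      using W(1) P(1) AB(2) by (simp add: g_def l_coset_conj_disjoint_iff)
  qed
  then have E_moved: "(g i <# (W <# B)) \<inter> (g j <# (W <# B)) = {}" if "i \<noteq> j" for i j
    using that by (metis Int_commute linorder_neq_iff)
  show "\<exists>D E g. D \<union> E = carrier G \<and> D \<inter> E = {} \<and>
      (\<forall>f\<in>F. (f <# D) \<inter> D = {}) \<and> (\<forall>i<k. g i \<in> carrier G) \<and>
      (\<forall>i<k. \<forall>i'<k. i \<noteq> i' \<longrightarrow> (g i <# E) \<inter> (g i' <# E) = {})"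
    by (intro exI[of _ "W <# A"] exI[of _ "W <# B"] exI[of _ g] conjI allI ballI impI)
      (simp_all add: D_Un_E D_Int_E D_moved g_carrier E_moved)
qed

lemma free_semigroup_on_l_coset_if_H_escapes:
  assumes H_escapes "finite F" "F \<subseteq> carrier G" "\<one> \<notin> F"
  shows "\<exists>g \<in> carrier G. free_semigroup_on G (g <# F)"
proof -
  let ?Q = "{inv f' \<otimes> f | f f'. f \<in> F \<and> f' \<in> F \<and> f \<noteq> f'}"
  have "finite (F \<union> ?Q)" "F \<union> ?Q \<subseteq> carrier G - {\<one>}"
    using finite_quotients[OF assms(2)] quotients_subset[OF assms(3)] assms(2-4) by auto
  then obtain W d where W: "W \<in> carrier G" "three_cosets d"
    "\<And>f. f \<in> F \<union> ?Q \<Longrightarrow> conjugate G W f \<in> odd_reduced (Suc d)"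
    by (rule exists_conjugate_odd_reduced[OF assms(1)]) blast
  obtain c where c: "c \<in> factor d - H"
    using factor_diff_H_nonempty by blast
  have "free_semigroup_on G ((W \<otimes> c \<otimes> inv W) <# F)"
    using free_semigroup_on_conjugate_l_coset[OF W(1) assms(3) c] W(3) by blast
  moreover have "W \<otimes> c \<otimes> inv W \<in> carrier G"
    using W(1) c factor_closed by blast
  ultimately show ?thesis
    by blast
qed

lemma infinite_carrier: "infinite (carrier G)"
proof -
  obtain c a where c: "c \<in> factor 0 - H" and a: "a \<in> factor (Suc 0) - H"
    using factor_diff_H_nonempty by blast
  have carrier: "c \<in> carrier G" "a \<in> carrier G"
    using c a factor_closed by auto
  have "(c \<otimes> a) [^] n \<noteq> \<one>" if "n \<ge> 1" for n :: nat
  proof -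
    have "concat (replicate n [c, a]) \<noteq> []"
      using that by (cases n) auto
    then have "word_prod G (concat (replicate n [c, a])) \<notin> H"
      using word_prod_alt_notin_H alt_concat_replicate[OF c a] by blast
    then show ?thesis
      using carrier subgroup.one_closed[OF subgroup_H] by (auto simp: word_prod_concat_replicate)
  qed
  then show ?thesis
    using infinite_carrier_if_pow_ne_one carrier by blast
qed

theorem free_semigroup_property_if_H_escapes:
  assumes H_escapes
  shows "free_semigroup_property G"
  unfolding free_semigroup_property_def
proof (intro allI impI)
  fix F assume F: "finite F \<and> F \<subseteq> carrier G"
  then have "finite (m_inv G ` F)"
    by simp
  then obtain a where a: "a \<in> carrier G" "a \<notin> m_inv G ` F"
    using infinite_carrier by (metis finite_subset subsetI)
  have "\<one> \<notin> a <# F"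
  proof
    assume "\<one> \<in> a <# F"
    then obtain f where "f \<in> F" "a \<otimes> f = \<one>"
      unfolding l_coset_def by auto
    then show False
      using a F inv_equality[of a f] by auto
  qed
  moreover have "finite (a <# F)" "a <# F \<subseteq> carrier G"
    using F a l_coset_subset_G unfolding l_coset_def by auto
  ultimately obtain g where "g \<in> carrier G" "free_semigroup_on G (g <# (a <# F))"
    using free_semigroup_on_l_coset_if_H_escapes[OF assms] by blast
  then show "\<exists>g \<in> carrier G. free_semigroup_on G (g <# F)"
    using a F by (intro bexI[of _ "g \<otimes> a"]) (auto simp: lcos_m_assoc)
qed

theorem K_set_trivial_if_conj_set_disjoint_H:
  assumes "\<forall>F. finite F \<and> F \<subseteq> H - {\<one>} \<longrightarrow> (\<exists>g \<in> carrier G. conj_set G g F \<inter> H = {})"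
  shows "K_set G G0 G1 H j = {\<one>}"
proof -
  have "x = \<one>" if x: "x \<in> K_set G G0 G1 H j" for x
  proof (rule ccontr)
    assume "x \<noteq> \<one>"
    have x_K: "x \<in> carrier G" "\<And>t. t \<in> H \<union> reduced j \<Longrightarrow> conjugate G t x \<in> H"
      using x unfolding mem_K_set_iff by auto
    then have "x \<in> H"
      using subgroup.one_closed[OF subgroup_H] by fastforce
    obtain a where a: "a \<in> factor j - H"
      using factor_diff_H_nonempty by blast
    then have a_carrier: "a \<in> carrier G" and "a \<in> reduced j"
      using factor_closed factor_diff_H_mem_odd_reduced reduced_eq_odd_Un_even by auto
    then have y: "conjugate G a x \<in> H" "conjugate G a x \<noteq> \<one>"
      using x_K \<open>x \<noteq> \<one>\<close> by (auto simp: conjugate_eq_one_iff)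
    obtain g where g: "g \<in> carrier G" "conj_set G g {x, conjugate G a x} \<inter> H = {}"
      using assms \<open>x \<in> H\<close> \<open>x \<noteq> \<one>\<close> y by (metis Diff_iff empty_subsetI finite.emptyI
          finite.insertI insert_subset singletonD)
    define s where "s = inv g"
    have s: "s \<in> carrier G" "conj_set G g = conj_set G (inv s)"
      using g(1) unfolding s_def by auto
    have escapes: "conjugate G s x \<notin> H" "conjugate G s (conjugate G a x) \<notin> H"
      using g(2) s unfolding conj_set_inv_eq[OF s(1)] by auto
    consider "s \<in> H \<union> reduced j" | "s \<in> reduced (Suc j)"
      using s(1) carrier_eq_normal_form[of j] by blast
    then show False
    proof cases
      case 1
      then show False using x_K(2) escapes(1) by blast
    next
      case 2
      then have "word_prod G [a] \<otimes> s \<in> reduced j"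
        using word_prod_mult_mem_reduced[of j "[a]" s] a by simp
      then have "conjugate G (a \<otimes> s) x \<in> H"
        using x_K(2) a_carrier by simp
      then show False
        using escapes(2) a_carrier s(1) x_K(1) by (simp add: conjugate_mult)
    qed
  qed
  moreover have "\<one> \<in> K_set G G0 G1 H j"
    using reduced_closed H_closed subgroup.one_closed[OF subgroup_H]
    by (auto simp: mem_K_set_iff)
  ultimately show ?thesis
    by blast
qed

end

theorem theorem3p2:
  fixes G :: "('a, 'b) monoid_scheme" and G0 G1 H :: "'a set"
  assumes "amalgam G G0 G1 H"
    and "nondegenerate G G0 G1 H"
  shows "((K_set G G0 G1 H 0 = {\<one>\<^bsub>G\<^esub>} \<and> K_set G G0 G1 H 1 = {\<one>\<^bsub>G\<^esub>}) \<longleftrightarrow>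
            (\<forall>F. finite F \<and> F \<subseteq> carrier G - {\<one>\<^bsub>G\<^esub>} \<longrightarrow>
               (\<exists>g\<in>carrier G. conj_set G g F \<inter> H = {})))
       \<and> ((\<forall>F. finite F \<and> F \<subseteq> carrier G - {\<one>\<^bsub>G\<^esub>} \<longrightarrow>
               (\<exists>g\<in>carrier G. conj_set G g F \<inter> H = {})) \<longleftrightarrow>
            (\<forall>F. finite F \<and> F \<subseteq> H - {\<one>\<^bsub>G\<^esub>} \<longrightarrow>
               (\<exists>g\<in>carrier G. conj_set G g F \<inter> H = {})))
       \<and> ((K_set G G0 G1 H 0 = {\<one>\<^bsub>G\<^esub>} \<and> K_set G G0 G1 H 1 = {\<one>\<^bsub>G\<^esub>}) \<longrightarrow>
            powers_group G \<and> free_semigroup_property G)"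
proof -
  interpret nondegenerate_amalgam G G0 G1 H
    using assms by unfold_locales
  let ?i = "K_set G G0 G1 H 0 = {\<one>\<^bsub>G\<^esub>} \<and> K_set G G0 G1 H 1 = {\<one>\<^bsub>G\<^esub>}"
  let ?ii = "\<forall>F. finite F \<and> F \<subseteq> carrier G - {\<one>\<^bsub>G\<^esub>} \<longrightarrow>
    (\<exists>g\<in>carrier G. conj_set G g F \<inter> H = {})"
  let ?iii = "\<forall>F. finite F \<and> F \<subseteq> H - {\<one>\<^bsub>G\<^esub>} \<longrightarrow> (\<exists>g\<in>carrier G. conj_set G g F \<inter> H = {})"
  have i_escapes: "?i \<Longrightarrow> H_escapes"
    using H_escapes_if_K_set_trivial by blast
  have "?i \<Longrightarrow> ?ii"
    using i_escapes conj_set_disjoint_H_if_H_escapes by blast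
  moreover have "?ii \<Longrightarrow> ?iii"
    using H_subset_carrier by blast
  moreover have "?iii \<Longrightarrow> ?i"
    using K_set_trivial_if_conj_set_disjoint_H by blast
  moreover have "?i \<Longrightarrow> powers_group G \<and> free_semigroup_property G"
    using i_escapes powers_group_if_H_escapes free_semigroup_property_if_H_escapes by blast
  ultimately show ?thesis
    by blast
qed

end
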